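(* Assume $L/F$ is unramified. If $\Phi\in\pi_{\tau,\chi}^{K_n}$ with $n\ge1$, then $\operatorname{supp}(\Phi)\subset\mathfrak p_L^{\lceil(c-n)/2\rceil}$ and $\Phi$ is constant on cosets of $\mathfrak p_L^{\,c-\lceil(c-n)/2\rceil}$.
   Context: $F$ is a $p$-adic field with $p\ne2$, ring of integers $\mathcal O$ with maximal ideal $\mathfrak p$, residue field of order $q$. $L/F$ is a quadratic extension with ring of integers $\mathcal O_L$, maximal ideal $\mathfrak p_L$, conjugation $x\mapsto\overline x$, norm $N:L\to F$, $L^1=\ker N$; $\omega$ is the nontrivial character of $F^\times/N(L^\times)$. $\chi$ is a character of $L^\times$ not factoring through $N$. $\tau$ is a nontrivial additive character of $F$ with conductor $\mathfrak p^c$, i.e. $\tau$ is trivial on $\mathfrak p^m$ iff $m\ge c$. Put $\langle x,y\rangle=\tau(\operatorname{tr}_{L/F}(xy))$ and $\widehat\Phi(x)=\int_L\Phi(y)\langle x,y\rangle\,dy$ for Schwartz functions $\Phi$ on $L$, with Haar measure normalized so that $\widehat{\widehat\Phi}(x)=\Phi(-x)$. $\mathcal S(L)_\chi$ is the space of Schwartz functions with $\Phi(xy)=\chi(y)^{-1}\Phi(x)$ for $y\in L^1$. $G_+=\{g\in GL_2(F):\det g\in N(L^\times)\}$, and $\pi_{\tau,\chi}$ is the irreducible representation of $G_+$ on $\mathcal S(L)_\chi$ satisfying $\pi_{\tau,\chi}\begin{pmatrix}1&u\\0&1\end{pmatrix}\Phi(x)=\tau(uN(x))\Phi(x)$, $\pi_{\tau,\chi}\begin{pmatrix}a&0\\0&a^{-1}\end{pmatrix}\Phi(x)=\omega(a)|a|_L^{1/2}\Phi(ax)$,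 $\pi_{\tau,\chi}\begin{pmatrix}0&1\\-1&0\end{pmatrix}\Phi(x)=\gamma\widehat\Phi(\overline x)$ for some complex $\gamma$ with $|\gamma|=1$. $K_n$ is the principal congruence subgroup of $GL_2(F)$ of level $n$ (contained in $G_+$ for $n\ge1$). *)

theory Defs
  imports Complex_Main
begin

text \<open>The valuation v of L is normalized (surjective onto the integers on L - {0});
  the value at 0 is irrelevant (0 is handled separately).\<close>

definition pL :: "('l::field \<Rightarrow> int) \<Rightarrow> int \<Rightarrow> 'l set" where
  "pL v k = {x. x = 0 \<or> k \<le> v x}"

definition is_dval :: "('l::field \<Rightarrow> int) \<Rightarrow> bool" where
  "is_dval v \<longleftrightarrow>
     (\<forall>x y. x \<noteq> 0 \<longrightarrow> y \<noteq> 0 \<longrightarrow> v (x * y) = v x + v y) \<and>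
     (\<forall>x y. x \<noteq> 0 \<longrightarrow> y \<noteq> 0 \<longrightarrow> x + y \<noteq> 0 \<longrightarrow> min (v x) (v y) \<le> v (x + y)) \<and>
     (\<forall>k. \<exists>x. x \<noteq> 0 \<and> v x = k)"

definition v_complete :: "('l::field \<Rightarrow> int) \<Rightarrow> bool" where
  "v_complete v \<longleftrightarrow>
     (\<forall>s :: nat \<Rightarrow> 'l. (\<forall>k. \<exists>N. \<forall>m\<ge>N. \<forall>n\<ge>N. s m - s n \<in> pL v k) \<longrightarrow>
        (\<exists>l. \<forall>k. \<exists>N. \<forall>n\<ge>N. s n - l \<in> pL v k))"

definition residue_field :: "('l::field \<Rightarrow> int) \<Rightarrow> 'l set set" where
  "residue_field v = {{y. y - x \<in> pL v 1} | x. x \<in> pL v 0}"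

definition p_adic_field :: "('l::field_char_0 \<Rightarrow> int) \<Rightarrow> bool" where
  "p_adic_field v \<longleftrightarrow> is_dval v \<and> v_complete v \<and> finite (residue_field v)"

definition resQ :: "('l::field \<Rightarrow> int) \<Rightarrow> nat" where
  "resQ v = card (residue_field v)"

definition absL :: "('l::field \<Rightarrow> int) \<Rightarrow> 'l \<Rightarrow> real" where
  "absL v x = (if x = 0 then 0 else real (resQ v) powr (- real_of_int (v x)))"

text \<open>F is the fixed field of the nontrivial involutive automorphism \<sigma> (conjugation) of L.\<close>
definition quad_conj :: "('l::field \<Rightarrow> 'l) \<Rightarrow> bool" where
  "quad_conj \<sigma> \<longleftrightarrow> (\<forall>x y. \<sigma> (x + y) = \<sigma> x + \<sigma> y) \<and> (\<forall>x y. \<sigma> (x * y) = \<sigma> x * \<sigma> y)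
     \<and> \<sigma> 1 = 1 \<and> (\<forall>x. \<sigma> (\<sigma> x) = x) \<and> (\<exists>x. \<sigma> x \<noteq> x)"

definition Fset :: "('l \<Rightarrow> 'l) \<Rightarrow> 'l set" where
  "Fset \<sigma> = {x. \<sigma> x = x}"

definition Nm :: "('l::field \<Rightarrow> 'l) \<Rightarrow> 'l \<Rightarrow> 'l" where
  "Nm \<sigma> x = x * \<sigma> x"

definition Tr :: "('l::field \<Rightarrow> 'l) \<Rightarrow> 'l \<Rightarrow> 'l" where
  "Tr \<sigma> x = x + \<sigma> x"

definition NLx :: "('l::field \<Rightarrow> 'l) \<Rightarrow> 'l set" where
  "NLx \<sigma> = Nm \<sigma> ` {x. x \<noteq> 0}"

definition omega :: "('l::field \<Rightarrow> 'l) \<Rightarrow> 'l \<Rightarrow> complex" where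
  "omega \<sigma> a = (if a \<in> NLx \<sigma> then 1 else -1)"

text \<open>L/F unramified: a uniformizer of L lies in F.\<close>
definition unramified :: "('l::field \<Rightarrow> int) \<Rightarrow> ('l \<Rightarrow> 'l) \<Rightarrow> bool" where
  "unramified v \<sigma> \<longleftrightarrow> (\<exists>w \<in> Fset \<sigma>. w \<noteq> 0 \<and> v w = 1)"

text \<open>Nontrivial additive character \<tau> of F with conductor p^c, where
  p^m = F \<inter> p_L^m (valid since L/F is unramified).\<close>
definition add_char_conductor :: "('l::field \<Rightarrow> int) \<Rightarrow> ('l \<Rightarrow> 'l) \<Rightarrow> ('l \<Rightarrow> complex) \<Rightarrow> int \<Rightarrow> bool" where
  "add_char_conductor v \<sigma> \<tau> c \<longleftrightarrow>
     (\<forall>x\<in>Fset \<sigma>. \<forall>y\<in>Fset \<sigma>. \<tau> (x + y) = \<tau> x * \<tau> y) \<and>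
     (\<forall>x\<in>Fset \<sigma>. cmod (\<tau> x) = 1) \<and>
     (\<forall>m::int. (\<forall>x \<in> Fset \<sigma> \<inter> pL v m. \<tau> x = 1) \<longleftrightarrow> c \<le> m)"

text \<open>(Continuous) character of L^x: multiplicative, nonvanishing, trivial on some 1 + p_L^k.\<close>
definition char_Lx :: "('l::field \<Rightarrow> int) \<Rightarrow> ('l \<Rightarrow> complex) \<Rightarrow> bool" where
  "char_Lx v \<chi> \<longleftrightarrow>
     (\<forall>x y. x \<noteq> 0 \<longrightarrow> y \<noteq> 0 \<longrightarrow> \<chi> (x * y) = \<chi> x * \<chi> y) \<and>
     (\<forall>x. x \<noteq> 0 \<longrightarrow> \<chi> x \<noteq> 0) \<and>
     (\<exists>k>0. \<forall>x u. x \<noteq> 0 \<longrightarrow> u \<in> pL v k \<longrightarrow> \<chi> (x * (1 + u)) = \<chi> x)"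

definition factors_through_norm :: "('l::field \<Rightarrow> 'l) \<Rightarrow> ('l \<Rightarrow> complex) \<Rightarrow> bool" where
  "factors_through_norm \<sigma> \<chi> \<longleftrightarrow> (\<exists>\<eta>. \<forall>x. x \<noteq> 0 \<longrightarrow> \<chi> x = \<eta> (Nm \<sigma> x))"

definition schwartz :: "('l::field \<Rightarrow> int) \<Rightarrow> ('l \<Rightarrow> complex) \<Rightarrow> bool" where
  "schwartz v \<Phi> \<longleftrightarrow> (\<exists>a. \<forall>x. \<Phi> x \<noteq> 0 \<longrightarrow> x \<in> pL v a) \<and>
                     (\<exists>b. \<forall>x y. y \<in> pL v b \<longrightarrow> \<Phi> (x + y) = \<Phi> x)"

definition S_chi :: "('l::field \<Rightarrow> int) \<Rightarrow> ('l \<Rightarrow> 'l) \<Rightarrow> ('l \<Rightarrow> complex) \<Rightarrow> ('l \<Rightarrow> complex) set" where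
  "S_chi v \<sigma> \<chi> = {\<Phi>. schwartz v \<Phi> \<and> (\<forall>x y. Nm \<sigma> y = 1 \<longrightarrow> \<Phi> (x * y) = inverse (\<chi> y) * \<Phi> x)}"

definition pairing :: "('l::field \<Rightarrow> 'l) \<Rightarrow> ('l \<Rightarrow> complex) \<Rightarrow> 'l \<Rightarrow> 'l \<Rightarrow> complex" where
  "pairing \<sigma> \<tau> x y = \<tau> (Tr \<sigma> (x * y))"

text \<open>A Haar integral on Schwartz functions of L: a nonzero positive
  translation-invariant linear functional.\<close>
definition haar_integral :: "('l::field \<Rightarrow> int) \<Rightarrow> (('l \<Rightarrow> complex) \<Rightarrow> complex) \<Rightarrow> bool" where
  "haar_integral v I \<longleftrightarrow>
     (\<forall>\<Phi> \<Psi>. schwartz v \<Phi> \<longrightarrow> schwartz v \<Psi> \<longrightarrow> I (\<lambda>x. \<Phi> x + \<Psi> x) = I \<Phi> + I \<Psi>) \<and>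
     (\<forall>\<Phi> c. schwartz v \<Phi> \<longrightarrow> I (\<lambda>x. c * \<Phi> x) = c * I \<Phi>) \<and>
     (\<forall>\<Phi> a. schwartz v \<Phi> \<longrightarrow> I (\<lambda>x. \<Phi> (x + a)) = I \<Phi>) \<and>
     (\<forall>\<Phi>. schwartz v \<Phi> \<longrightarrow> (\<forall>x. Im (\<Phi> x) = 0 \<and> 0 \<le> Re (\<Phi> x)) \<longrightarrow> Im (I \<Phi>) = 0 \<and> 0 \<le> Re (I \<Phi>)) \<and>
     I (\<lambda>x. if x \<in> pL v 0 then 1 else 0) \<noteq> 0"

definition FT :: "(('l::field \<Rightarrow> complex) \<Rightarrow> complex) \<Rightarrow> ('l \<Rightarrow> 'l) \<Rightarrow> ('l \<Rightarrow> complex) \<Rightarrow> ('l \<Rightarrow> complex) \<Rightarrow> ('l \<Rightarrow> complex)" where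
  "FT I \<sigma> \<tau> \<Phi> = (\<lambda>x. I (\<lambda>y. \<Phi> y * pairing \<sigma> \<tau> x y))"

definition self_dual :: "('l::field \<Rightarrow> int) \<Rightarrow> (('l \<Rightarrow> complex) \<Rightarrow> complex) \<Rightarrow> ('l \<Rightarrow> 'l) \<Rightarrow> ('l \<Rightarrow> complex) \<Rightarrow> bool" where
  "self_dual v I \<sigma> \<tau> \<longleftrightarrow> (\<forall>\<Phi>. schwartz v \<Phi> \<longrightarrow> FT I \<sigma> \<tau> (FT I \<sigma> \<tau> \<Phi>) = (\<lambda>x. \<Phi> (- x)))"

text \<open>(a,b,c,d) stands for the matrix [[a,b],[c,d]].\<close>
type_synonym 'a m2 = "'a \<times> 'a \<times> 'a \<times> 'a"

fun m2mul :: "'a::comm_ring_1 m2 \<Rightarrow> 'a m2 \<Rightarrow> 'a m2" where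
  "m2mul (a, b, c, d) (a', b', c', d') =
     (a * a' + b * c', a * b' + b * d', c * a' + d * c', c * b' + d * d')"

fun m2det :: "'a::comm_ring_1 m2 \<Rightarrow> 'a" where
  "m2det (a, b, c, d) = a * d - b * c"

definition Gplus :: "('l::field \<Rightarrow> 'l) \<Rightarrow> 'l m2 set" where
  "Gplus \<sigma> = {(a, b, c, d). a \<in> Fset \<sigma> \<and> b \<in> Fset \<sigma> \<and> c \<in> Fset \<sigma> \<and> d \<in> Fset \<sigma> \<and>
                 m2det (a, b, c, d) \<in> NLx \<sigma>}"

text \<open>principal congruence subgroup of level n (entries in F; for n \<ge> 1 automatically in GL_2(O))\<close>
definition Kn :: "('l::field \<Rightarrow> int) \<Rightarrow> ('l \<Rightarrow> 'l) \<Rightarrow> nat \<Rightarrow> 'l m2 set" where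
  "Kn v \<sigma> n = {(a, b, c, d). a \<in> Fset \<sigma> \<and> b \<in> Fset \<sigma> \<and> c \<in> Fset \<sigma> \<and> d \<in> Fset \<sigma> \<and>
       a - 1 \<in> pL v (int n) \<and> b \<in> pL v (int n) \<and> c \<in> pL v (int n) \<and> d - 1 \<in> pL v (int n)}"

definition weil_rep ::
  "('l::field \<Rightarrow> int) \<Rightarrow> ('l \<Rightarrow> 'l) \<Rightarrow> ('l \<Rightarrow> complex) \<Rightarrow> ('l \<Rightarrow> complex) \<Rightarrow>
   (('l \<Rightarrow> complex) \<Rightarrow> complex) \<Rightarrow> ('l m2 \<Rightarrow> ('l \<Rightarrow> complex) \<Rightarrow> ('l \<Rightarrow> complex)) \<Rightarrow> bool" where
  "weil_rep v \<sigma> \<tau> \<chi> I \<pi> \<longleftrightarrow>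
     (let S = S_chi v \<sigma> \<chi> in
     (\<forall>g\<in>Gplus \<sigma>. \<forall>\<Phi>\<in>S. \<pi> g \<Phi> \<in> S) \<and>
     (\<forall>g\<in>Gplus \<sigma>. \<forall>\<Phi>\<in>S. \<forall>\<Psi>\<in>S. \<pi> g (\<lambda>x. \<Phi> x + \<Psi> x) = (\<lambda>x. \<pi> g \<Phi> x + \<pi> g \<Psi> x)) \<and>
     (\<forall>g\<in>Gplus \<sigma>. \<forall>\<Phi>\<in>S. \<forall>z. \<pi> g (\<lambda>x. z * \<Phi> x) = (\<lambda>x. z * \<pi> g \<Phi> x)) \<and>
     (\<forall>\<Phi>\<in>S. \<pi> (1, 0, 0, 1) \<Phi> = \<Phi>) \<and>
     (\<forall>g\<in>Gplus \<sigma>. \<forall>h\<in>Gplus \<sigma>. \<forall>\<Phi>\<in>S. \<pi> (m2mul g h) \<Phi> = \<pi> g (\<pi> h \<Phi>)) \<and>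
     (\<forall>W. W \<subseteq> S \<longrightarrow> (\<lambda>x. 0) \<in> W \<longrightarrow>
          (\<forall>\<Phi>\<in>W. \<forall>\<Psi>\<in>W. (\<lambda>x. \<Phi> x + \<Psi> x) \<in> W) \<longrightarrow>
          (\<forall>\<Phi>\<in>W. \<forall>z. (\<lambda>x. z * \<Phi> x) \<in> W) \<longrightarrow>
          (\<forall>g\<in>Gplus \<sigma>. \<forall>\<Phi>\<in>W. \<pi> g \<Phi> \<in> W) \<longrightarrow>
          W = {\<lambda>x. 0} \<or> W = S) \<and>
     (\<forall>u\<in>Fset \<sigma>. \<forall>\<Phi>\<in>S. \<pi> (1, u, 0, 1) \<Phi> = (\<lambda>x. \<tau> (u * Nm \<sigma> x) * \<Phi> x)) \<and>
     (\<forall>a\<in>Fset \<sigma>. a \<noteq> 0 \<longrightarrow> (\<forall>\<Phi>\<in>S. \<pi> (a, 0, 0, inverse a) \<Phi> =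
          (\<lambda>x. omega \<sigma> a * complex_of_real (sqrt (absL v a)) * \<Phi> (a * x)))) \<and>
     (\<exists>\<gamma>. cmod \<gamma> = 1 \<and> (\<forall>\<Phi>\<in>S. \<pi> (0, 1, -1, 0) \<Phi> = (\<lambda>x. \<gamma> * FT I \<sigma> \<tau> \<Phi> (\<sigma> x)))))"

end

theory Submission
  imports Defs
begin

(* Invariance of Phi under the upper unipotent matrices (1,u,0,1) of K_n says
   tau(u N(x)) Phi(x) = Phi(x) for all u in p^n, so Phi(x) /= 0 forces u N(x) into the kernel p^c
   of tau, i.e. n + 2 v(x) >= c; here v(N x) = 2 v(x) because conjugation preserves the valuation
   of the unramified extension. Since (1,u,0,1) w = w (1,0,-u,1) for the Weyl element w,
   invariance under the lower unipotents of K_n gives pi(w) Phi, which is the Fourier transform of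
   Phi up to a unit and conjugation, the same support bound p_L^a, and Fourier inversion turns it
   into invariance of Phi under translation by p_L^(c-a).

   Conjugation preserves the valuation by Hensel's lemma (p /= 2): for a uniformizer e in F and
   integral x, 1 + e x^2 is a square, whereas 1 + e sigma(x)^2 has odd negative valuation, hence
   is no square, if sigma(x) is not integral. *)

lemma dval_mult: "is_dval v \<Longrightarrow> x \<noteq> 0 \<Longrightarrow> y \<noteq> 0 \<Longrightarrow> v (x * y) = v x + v y"
  unfolding is_dval_def by blast

lemma dval_ultrametric:
  "is_dval v \<Longrightarrow> x \<noteq> 0 \<Longrightarrow> y \<noteq> 0 \<Longrightarrow> x + y \<noteq> 0 \<Longrightarrow> min (v x) (v y) \<le> v (x + y)"
  unfolding is_dval_def by blast

lemma dval_one: "is_dval v \<Longrightarrow> v (1::'a::field) = 0"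
  using dval_mult[of v "1::'a" 1] by simp

lemma dval_uminus: "is_dval v \<Longrightarrow> (x::'a::field) \<noteq> 0 \<Longrightarrow> v (- x) = v x"
  using dval_mult[of v "-1::'a" "-1"] dval_mult[of v "-1::'a" x] dval_one[of v] by simp

lemma dval_inverse: "is_dval v \<Longrightarrow> (x::'a::field) \<noteq> 0 \<Longrightarrow> v (inverse x) = - v x"
  using dval_mult[of v x "inverse x"] dval_one[of v] by simp

lemma dval_divide: "is_dval v \<Longrightarrow> (x::'a::field) \<noteq> 0 \<Longrightarrow> y \<noteq> 0 \<Longrightarrow> v (x / y) = v x - v y"
  using dval_mult[of v x "inverse y"] dval_inverse[of v y] by (simp add: divide_inverse)

lemma dval_power: "is_dval v \<Longrightarrow> (x::'a::field) \<noteq> 0 \<Longrightarrow> v (x ^ n) = int n * v x"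
  by (induction n) (simp_all add: dval_one dval_mult algebra_simps)

lemma dval_power_int: "is_dval v \<Longrightarrow> (x::'a::field) \<noteq> 0 \<Longrightarrow> v (x powi k) = k * v x"
  by (simp add: power_int_def dval_power dval_inverse power_inverse)

lemma mem_pL_iff: "a \<in> pL v k \<longleftrightarrow> a = 0 \<or> k \<le> v a"
  unfolding pL_def by simp

lemma zero_mem_pL [simp]: "0 \<in> pL v k"
  by (simp add: mem_pL_iff)

lemma pL_antimono: "k \<le> k' \<Longrightarrow> a \<in> pL v k' \<Longrightarrow> a \<in> pL v k"
  by (auto simp: mem_pL_iff)

lemma pL_add:
  assumes "is_dval v" "a \<in> pL v k" "b \<in> pL v k"
  shows "a + b \<in> pL v k"
  using assms dval_ultrametric[OF assms(1), of a b]
  by (cases "a = 0 \<or> b = 0 \<or> a + b = 0") (auto simp: mem_pL_iff)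

lemma pL_uminus: "is_dval v \<Longrightarrow> (a::'a::field) \<in> pL v k \<Longrightarrow> - a \<in> pL v k"
  using dval_uminus[of v a] by (cases "a = 0") (auto simp: mem_pL_iff)

lemma pL_diff: "is_dval v \<Longrightarrow> (a::'a::field) \<in> pL v k \<Longrightarrow> b \<in> pL v k \<Longrightarrow> a - b \<in> pL v k"
  using pL_add[of v a k "- b"] pL_uminus[of v b k] by simp

lemma pL_mult:
  "is_dval v \<Longrightarrow> (a::'a::field) \<in> pL v k \<Longrightarrow> b \<in> pL v k' \<Longrightarrow> a * b \<in> pL v (k + k')"
  using dval_mult[of v a b] by (cases "a = 0 \<or> b = 0") (auto simp: mem_pL_iff)

lemma dval_add_eq_left:
  fixes a b :: "'a::field"
  assumes dv: "is_dval v" and a: "a \<noteq> 0" and b: "b \<in> pL v (v a + 1)"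
  shows "a + b \<noteq> 0 \<and> v (a + b) = v a"
proof (cases "b = 0")
  case False
  then have vb: "v a < v b" using b by (simp add: mem_pL_iff)
  have ab: "a + b \<noteq> 0"
  proof
    assume "a + b = 0"
    then have "b = - a" by (simp add: eq_neg_iff_add_eq_0 add.commute)
    then show False using vb dval_uminus[OF dv a] by simp
  qed
  have "min (v (a + b)) (v (- b)) \<le> v (a + b + - b)"
    using dval_ultrametric[OF dv ab, of "- b"] False a by simp
  then have "v (a + b) \<le> v a" using vb dval_uminus[OF dv False] by simp
  moreover have "v a \<le> v (a + b)" using dval_ultrametric[OF dv a False ab] vb by simp
  ultimately show ?thesis using ab by simp
qed (simp add: a)

lemma newton_sqrt_step:
  fixes a y :: "'a::field_char_0"
  assumes dv: "is_dval v" and v2: "v 2 = 0" and y: "y \<noteq> 0" "v y = 0"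
    and k: "1 \<le> k" and err: "y * y - a \<in> pL v k"
  defines "y' \<equiv> y - (y * y - a) / (2 * y)"
  shows "y' \<noteq> 0 \<and> v y' = 0 \<and> y' * y' - a \<in> pL v (k + 1) \<and> y' - y \<in> pL v k"
proof -
  define d where "d = (y * y - a) / (2 * y)"
  have v2y: "v (2 * y) = 0" using dval_mult[OF dv, of 2 y] v2 y by simp
  have d: "d \<in> pL v k"
  proof (cases "y * y - a = 0")
    case False
    then show ?thesis
      using err dval_divide[OF dv False, of "2 * y"] y v2y by (auto simp: mem_pL_iff d_def)
  qed (simp add: d_def)
  have "- d \<in> pL v (v y + 1)" using pL_uminus[OF dv pL_antimono[OF k d]] y by simp
  moreover have y': "y' = y + - d" by (simp add: y'_def d_def)
  ultimately have unit: "y' \<noteq> 0 \<and> v y' = 0" using dval_add_eq_left[OF dv y(1), of "- d"] y by simp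
  have "y' * y' - a = d * d + ((y * y - a) - d * (2 * y))"
    unfolding y' by (simp add: algebra_simps)
  also have "d * (2 * y) = y * y - a" using y by (simp add: d_def)
  finally have "y' * y' - a = d * d" by simp
  moreover have "d * d \<in> pL v (k + 1)" using pL_antimono[OF _ pL_mult[OF dv d d]] k by simp
  moreover have "y' - y = - d" by (simp add: y')
  ultimately show ?thesis using unit pL_uminus[OF dv d] by simp
qed

lemma pL_telescoping:
  assumes dv: "is_dval v" and step: "\<And>k. s (Suc k) - s k \<in> pL v (int k)"
  shows "s (N + j) - s N \<in> pL v (int N)"
proof (induction j)
  case (Suc j)
  have "s (Suc (N + j)) - s (N + j) \<in> pL v (int N)"
    using pL_antimono[OF _ step[of "N + j"]] by simp
  from pL_add[OF dv this Suc.IH] show ?case by simp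
qed simp

lemma v_complete_limit_of_small_steps:
  assumes dv: "is_dval v" and cp: "v_complete v"
    and step: "\<And>k. s (Suc k) - s k \<in> pL v (int k)"
  shows "\<exists>l. \<forall>k. \<exists>N. \<forall>n\<ge>N. s n - l \<in> pL v k"
proof -
  have "\<exists>N. \<forall>m\<ge>N. \<forall>n\<ge>N. s m - s n \<in> pL v k" for k
  proof (intro exI allI impI)
    fix m n assume "nat k \<le> m" "nat k \<le> n"
    then have "s m - s (nat k) \<in> pL v k" "s n - s (nat k) \<in> pL v k"
      using pL_telescoping[OF dv step, of "nat k"] pL_antimono[of k "int (nat k)"]
      by (metis le_add_diff_inverse nat_int_comparison(3) nat_le_iff order.refl)+
    from pL_diff[OF dv this] show "s m - s n \<in> pL v k" by simp
  qed
  then show ?thesis using cp unfolding v_complete_def by blast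
qed

lemma square_of_limit_eq:
  fixes a l :: "'a::field"
  assumes dv: "is_dval v" and int: "\<And>n. s n \<in> pL v 0"
    and err: "\<And>n. s n * s n - a \<in> pL v (int n)"
    and lim: "\<forall>k. \<exists>N. \<forall>n\<ge>N. s n - l \<in> pL v k"
  shows "l * l = a"
proof (rule ccontr)
  define D where "D = l * l - a"
  assume "l * l \<noteq> a"
  then have "D \<noteq> 0" by (simp add: D_def)
  define K where "K = max (v D + 1) 0"
  obtain N where N: "\<forall>n\<ge>N. s n - l \<in> pL v K" using lim by blast
  define n where "n = max N (nat K)"
  have close: "s n - l \<in> pL v K" using N by (simp add: n_def)
  have "s n + s n - (s n - l) \<in> pL v 0"
    using pL_diff[OF dv pL_add[OF dv int[of n] int[of n]] pL_antimono[OF _ close]] by (simp add: K_def)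
  also have "s n + s n - (s n - l) = s n + l" by simp
  finally have "(s n - l) * (s n + l) \<in> pL v K"
    using pL_mult[OF dv close, of "s n + l" 0] by (simp add: algebra_simps)
  moreover have "s n * s n - a \<in> pL v K"
    using pL_antimono[OF _ err[of n]] by (simp add: n_def)
  moreover have "D = (s n * s n - a) - (s n - l) * (s n + l)"
    by (simp add: D_def algebra_simps)
  ultimately have "D \<in> pL v K" using pL_diff[OF dv] by simp
  then show False using \<open>D \<noteq> 0\<close> by (simp add: mem_pL_iff K_def)
qed

lemma exists_sqrt_one_plus:
  fixes t :: "'a::field_char_0"
  assumes dv: "is_dval v" and cp: "v_complete v" and v2: "v 2 = 0" and t: "t \<in> pL v 1"
  shows "\<exists>y. y * y = 1 + t"
proof -
  define newton where "newton y = y - (y * y - (1 + t)) / (2 * y)" for y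
  define s where "s k = (newton ^^ k) 1" for k
  have s_Suc: "s (Suc k) = newton (s k)" for k by (simp add: s_def)
  have approx: "s k \<noteq> 0 \<and> v (s k) = 0 \<and> s k * s k - (1 + t) \<in> pL v (int k + 1)" for k
  proof (induction k)
    case 0
    show ?case using dval_one[OF dv] pL_uminus[OF dv t] by (simp add: s_def)
  next
    case (Suc k)
    then show ?case
      using newton_sqrt_step[OF dv v2, of "s k" "int k + 1" "1 + t"]
      unfolding s_Suc newton_def[symmetric] by (simp add: add.commute)
  qed
  have "s (Suc k) - s k \<in> pL v (int k + 1)" for k
    using newton_sqrt_step[OF dv v2, of "s k" "int k + 1" "1 + t"] approx[of k]
    unfolding s_Suc newton_def[symmetric] by simp
  then have "s (Suc k) - s k \<in> pL v (int k)" for k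
    by (rule pL_antimono[rotated]) simp
  then obtain l where "\<forall>k. \<exists>N. \<forall>n\<ge>N. s n - l \<in> pL v k"
    using v_complete_limit_of_small_steps[OF dv cp] by blast
  moreover have "s n \<in> pL v 0" "s n * s n - (1 + t) \<in> pL v (int n)" for n
    using approx[of n] pL_antimono[of "int n" "int n + 1"] by (auto simp: mem_pL_iff)
  ultimately show ?thesis using square_of_limit_eq[OF dv] by blast
qed

lemma square_ne_one_plus_odd_negative:
  fixes T y :: "'a::field"
  assumes dv: "is_dval v" and T: "T \<noteq> 0" "v T < 0" "odd (v T)"
  shows "y * y \<noteq> 1 + T"
proof
  assume sq: "y * y = 1 + T"
  have "1 \<in> pL v (v T + 1)" using T dval_one[OF dv] by (simp add: mem_pL_iff)
  then have "T + 1 \<noteq> 0 \<and> v (T + 1) = v T" using dval_add_eq_left[OF dv T(1)] by blast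
  then have "y \<noteq> 0" and "v (y * y) = v T" using sq by (auto simp: add.commute)
  then have "v T = 2 * v y" using dval_mult[OF dv] by simp
  then show False using T(3) by simp
qed

lemma quad_conj_add: "quad_conj \<sigma> \<Longrightarrow> \<sigma> (x + y) = \<sigma> x + \<sigma> y"
  unfolding quad_conj_def by blast

lemma quad_conj_mult: "quad_conj \<sigma> \<Longrightarrow> \<sigma> (x * y) = \<sigma> x * \<sigma> y"
  unfolding quad_conj_def by blast

lemma quad_conj_one: "quad_conj \<sigma> \<Longrightarrow> \<sigma> 1 = 1"
  unfolding quad_conj_def by blast

lemma quad_conj_involution: "quad_conj \<sigma> \<Longrightarrow> \<sigma> (\<sigma> x) = x"
  unfolding quad_conj_def by blast

lemma quad_conj_zero: "quad_conj \<sigma> \<Longrightarrow> \<sigma> (0::'a::field) = 0"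
  using quad_conj_add[of \<sigma> "0::'a" 0] by (metis add.right_neutral add_left_cancel)

lemma quad_conj_uminus: "quad_conj \<sigma> \<Longrightarrow> \<sigma> (- x::'a::field) = - \<sigma> x"
  using quad_conj_add[of \<sigma> x "- x"] quad_conj_zero[of \<sigma>] by (metis minus_unique add.right_inverse)

lemma quad_conj_nonzero: "quad_conj \<sigma> \<Longrightarrow> (x::'a::field) \<noteq> 0 \<Longrightarrow> \<sigma> x \<noteq> 0"
  using quad_conj_involution[of \<sigma> x] quad_conj_zero[of \<sigma>] by metis

lemma quad_conj_inverse: "quad_conj \<sigma> \<Longrightarrow> \<sigma> (inverse x::'a::field) = inverse (\<sigma> x)"
  using quad_conj_mult[of \<sigma> x "inverse x"] quad_conj_one[of \<sigma>] quad_conj_zero[of \<sigma>]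
  by (cases "x = 0") (auto intro: inverse_unique[symmetric])

lemma quad_conj_power_int: "quad_conj \<sigma> \<Longrightarrow> \<sigma> (x powi k::'a::field) = \<sigma> x powi k"
proof -
  assume qc: "quad_conj \<sigma>"
  have "\<sigma> (x ^ n) = \<sigma> x ^ n" for x :: 'a and n
    by (induction n) (simp_all add: quad_conj_one[OF qc] quad_conj_mult[OF qc])
  then show ?thesis by (simp add: power_int_def quad_conj_inverse[OF qc])
qed

lemma dval_quad_conj_nonneg:
  fixes x :: "'a::field_char_0"
  assumes dv: "is_dval v" and cp: "v_complete v" and v2: "v 2 = 0" and qc: "quad_conj \<sigma>"
    and p: "\<sigma> p = p" "p \<noteq> 0" "v p = 1" and x: "x \<noteq> 0" "0 \<le> v x"
  shows "0 \<le> v (\<sigma> x)"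
proof (rule ccontr)
  assume neg: "\<not> 0 \<le> v (\<sigma> x)"
  have "v (p * x * x) = 1 + 2 * v x" using dval_mult[OF dv] p x by simp
  then have "p * x * x \<in> pL v 1" using x by (simp add: mem_pL_iff)
  then obtain y where "y * y = 1 + p * x * x" using exists_sqrt_one_plus[OF dv cp v2] by blast
  then have "\<sigma> (y * y) = \<sigma> (1 + p * x * x)" by simp
  then have "\<sigma> y * \<sigma> y = 1 + p * \<sigma> x * \<sigma> x"
    by (simp add: quad_conj_mult[OF qc] quad_conj_add[OF qc] quad_conj_one[OF qc] p)
  moreover have "v (p * \<sigma> x * \<sigma> x) = 1 + 2 * v (\<sigma> x)"
    using dval_mult[OF dv] p quad_conj_nonzero[OF qc x(1)] by simp
  ultimately show False
    using square_ne_one_plus_odd_negative[OF dv, of "p * \<sigma> x * \<sigma> x" "\<sigma> y"] neg p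
      quad_conj_nonzero[OF qc x(1)] by simp
qed

lemma dval_quad_conj:
  fixes x :: "'a::field_char_0"
  assumes dv: "is_dval v" and cp: "v_complete v" and v2: "v 2 = 0" and qc: "quad_conj \<sigma>"
    and ur: "unramified v \<sigma>"
  shows "v (\<sigma> x) = v x"
proof (cases "x = 0")
  case True
  then show ?thesis using quad_conj_zero[OF qc] by simp
next
  case x: False
  obtain p where p: "\<sigma> p = p" "p \<noteq> 0" "v p = 1"
    using ur unfolding unramified_def Fset_def by blast
  have le: "v y \<le> v (\<sigma> y)" if y: "y \<noteq> 0" for y
  proof -
    define z where "z = y * p powi (- v y)"
    have "z \<noteq> 0" "v z = 0" using dval_mult[OF dv] dval_power_int[OF dv] p y by (simp_all add: z_def)
    then have "0 \<le> v (\<sigma> z)" using dval_quad_conj_nonneg[OF dv cp v2 qc p] by simp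
    moreover have "\<sigma> z = \<sigma> y * p powi (- v y)"
      by (simp add: z_def quad_conj_mult[OF qc] quad_conj_power_int[OF qc] p)
    ultimately show ?thesis
      using dval_mult[OF dv] dval_power_int[OF dv] p quad_conj_nonzero[OF qc y] by simp
  qed
  show ?thesis using le[OF x] le[OF quad_conj_nonzero[OF qc x]] quad_conj_involution[OF qc, of x]
    by simp
qed

lemma Nm_in_Fset: "quad_conj \<sigma> \<Longrightarrow> Nm \<sigma> x \<in> Fset \<sigma>"
  by (simp add: Nm_def Fset_def quad_conj_mult quad_conj_involution mult.commute)

lemma Tr_in_Fset: "quad_conj \<sigma> \<Longrightarrow> Tr \<sigma> x \<in> Fset \<sigma>"
  by (simp add: Tr_def Fset_def quad_conj_add quad_conj_involution add.commute)

lemma Tr_add: "quad_conj \<sigma> \<Longrightarrow> Tr \<sigma> (x + y) = Tr \<sigma> x + Tr \<sigma> y"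
  by (simp add: Tr_def quad_conj_add algebra_simps)

lemma dval_Nm:
  assumes dv: "is_dval v" and qc: "quad_conj \<sigma>" and v\<sigma>: "\<And>x. v (\<sigma> x) = v x"
    and x: "(x::'a::field) \<noteq> 0"
  shows "Nm \<sigma> x \<noteq> 0 \<and> v (Nm \<sigma> x) = 2 * v x"
  using dval_mult[OF dv x quad_conj_nonzero[OF qc x]] v\<sigma>[of x] quad_conj_nonzero[OF qc x] x
  by (simp add: Nm_def)

lemma Tr_mem_pL:
  assumes dv: "is_dval v" and qc: "quad_conj \<sigma>" and v\<sigma>: "\<And>x. v (\<sigma> x) = v x"
    and w: "(w::'a::field) \<in> pL v k"
  shows "Tr \<sigma> w \<in> pL v k"
proof -
  have "\<sigma> w \<in> pL v k" using w v\<sigma> quad_conj_zero[OF qc] by (cases "w = 0") (auto simp: mem_pL_iff)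
  then show ?thesis unfolding Tr_def using pL_add[OF dv w] by blast
qed

lemma add_char_conductor_zero:
  assumes qc: "quad_conj \<sigma>" and ac: "add_char_conductor v \<sigma> \<tau> c"
  shows "\<tau> (0::'a::field) = 1"
proof -
  have z: "(0::'a) \<in> Fset \<sigma>" using quad_conj_zero[OF qc] by (simp add: Fset_def)
  have "\<tau> 0 = \<tau> 0 * \<tau> 0" using ac z unfolding add_char_conductor_def by (metis add_0)
  moreover have "\<tau> 0 \<noteq> 0" using ac z unfolding add_char_conductor_def by force
  ultimately show ?thesis by (metis mult_cancel_left1)
qed

lemma mem_pL_if_tau_Nm_trivial:
  fixes x :: "'a::field" and m :: int
  assumes dv: "is_dval v" and qc: "quad_conj \<sigma>" and v\<sigma>: "\<And>x. v (\<sigma> x) = v x"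
    and ac: "add_char_conductor v \<sigma> \<tau> c"
    and triv: "\<forall>u\<in>Fset \<sigma> \<inter> pL v m. \<tau> (u * Nm \<sigma> x) = 1"
  shows "x \<in> pL v \<lceil>real_of_int (c - m) / 2\<rceil>"
proof (rule ccontr)
  assume "x \<notin> pL v \<lceil>real_of_int (c - m) / 2\<rceil>"
  then have x: "x \<noteq> 0" and "v x < \<lceil>real_of_int (c - m) / 2\<rceil>" by (auto simp: mem_pL_iff)
  then have "real_of_int (v x) < real_of_int (c - m) / 2" by (simp add: less_ceiling_iff)
  then have "real_of_int (2 * v x) < real_of_int (c - m)" by simp
  then have "m + 2 * v x < c" by linarith
  then have "\<not> (\<forall>y \<in> Fset \<sigma> \<inter> pL v (m + 2 * v x). \<tau> y = 1)"
    using ac unfolding add_char_conductor_def by auto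
  then obtain y where y: "y \<in> Fset \<sigma>" "y \<in> pL v (m + 2 * v x)" "\<tau> y \<noteq> 1" by blast
  have Nm: "Nm \<sigma> x \<noteq> 0" "v (Nm \<sigma> x) = 2 * v x" using dval_Nm[OF dv qc v\<sigma> x] by simp_all
  have "y \<noteq> 0" using y add_char_conductor_zero[OF qc ac] by auto
  define u where "u = y / Nm \<sigma> x"
  have "u \<in> Fset \<sigma>" using y Nm_in_Fset[OF qc, of x] quad_conj_mult[OF qc] quad_conj_inverse[OF qc]
    by (simp add: u_def Fset_def divide_inverse)
  moreover have "u \<in> pL v m"
    using y \<open>y \<noteq> 0\<close> dval_divide[OF dv \<open>y \<noteq> 0\<close> Nm(1)] Nm by (simp add: u_def mem_pL_iff)
  moreover have "u * Nm \<sigma> x = y" using Nm by (simp add: u_def)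
  ultimately show False using triv y by auto
qed

lemma pairing_add_left:
  assumes qc: "quad_conj \<sigma>" and ac: "add_char_conductor v \<sigma> \<tau> c"
  shows "pairing \<sigma> \<tau> (x + y) z = pairing \<sigma> \<tau> x z * pairing \<sigma> \<tau> (y::'a::field) z"
  using ac Tr_in_Fset[OF qc] Tr_add[OF qc, of "x * z" "y * z"]
  unfolding add_char_conductor_def pairing_def by (simp add: distrib_right)

lemma pairing_eq_one:
  assumes dv: "is_dval v" and qc: "quad_conj \<sigma>" and v\<sigma>: "\<And>x. v (\<sigma> x) = v x"
    and ac: "add_char_conductor v \<sigma> \<tau> c" and yz: "(y::'a::field) * z \<in> pL v c"
  shows "pairing \<sigma> \<tau> y z = 1"
  using ac Tr_in_Fset[OF qc] Tr_mem_pL[OF dv qc v\<sigma> yz]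
  unfolding add_char_conductor_def pairing_def by blast

lemma translation_invariant_if_FT_supported:
  fixes \<Phi> :: "'a::field \<Rightarrow> complex"
  assumes dv: "is_dval v" and qc: "quad_conj \<sigma>" and v\<sigma>: "\<And>x. v (\<sigma> x) = v x"
    and ac: "add_char_conductor v \<sigma> \<tau> c" and sd: "self_dual v I \<sigma> \<tau>" and \<Phi>: "schwartz v \<Phi>"
    and supp: "\<forall>z. FT I \<sigma> \<tau> \<Phi> z \<noteq> 0 \<longrightarrow> z \<in> pL v a"
  shows "\<forall>x y. y \<in> pL v (c - a) \<longrightarrow> \<Phi> (x + y) = \<Phi> x"
proof (intro allI impI)
  fix x y assume y: "y \<in> pL v (c - a)"
  have "(\<lambda>z. FT I \<sigma> \<tau> \<Phi> z * pairing \<sigma> \<tau> (- (x + y)) z) = (\<lambda>z. FT I \<sigma> \<tau> \<Phi> z * pairing \<sigma> \<tau> (- x) z)"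
  proof
    fix z
    show "FT I \<sigma> \<tau> \<Phi> z * pairing \<sigma> \<tau> (- (x + y)) z = FT I \<sigma> \<tau> \<Phi> z * pairing \<sigma> \<tau> (- x) z"
    proof (cases "FT I \<sigma> \<tau> \<Phi> z = 0")
      case False
      have "- y * z \<in> pL v c" using pL_mult[OF dv pL_uminus[OF dv y]] supp False by fastforce
      then have "pairing \<sigma> \<tau> (- y) z = 1" using pairing_eq_one[OF dv qc v\<sigma> ac] by blast
      then show ?thesis using pairing_add_left[OF qc ac, of "- x" "- y" z] by simp
    qed simp
  qed
  from arg_cong[of _ _ I, OF this]
  have "FT I \<sigma> \<tau> (FT I \<sigma> \<tau> \<Phi>) (- (x + y)) = FT I \<sigma> \<tau> (FT I \<sigma> \<tau> \<Phi>) (- x)"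
    by (simp only: FT_def[of I \<sigma> \<tau> "FT I \<sigma> \<tau> \<Phi>"])
  then show "\<Phi> (x + y) = \<Phi> x" using sd \<Phi> unfolding self_dual_def by (metis minus_minus)
qed

lemma weil_rep_closed:
  "weil_rep v \<sigma> \<tau> \<chi> I \<pi> \<Longrightarrow> g \<in> Gplus \<sigma> \<Longrightarrow> \<Phi> \<in> S_chi v \<sigma> \<chi> \<Longrightarrow> \<pi> g \<Phi> \<in> S_chi v \<sigma> \<chi>"
  unfolding weil_rep_def Let_def by (elim conjE) simp

lemma weil_rep_mult:
  "weil_rep v \<sigma> \<tau> \<chi> I \<pi> \<Longrightarrow> g \<in> Gplus \<sigma> \<Longrightarrow> h \<in> Gplus \<sigma> \<Longrightarrow> \<Phi> \<in> S_chi v \<sigma> \<chi> \<Longrightarrow>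
    \<pi> (m2mul g h) \<Phi> = \<pi> g (\<pi> h \<Phi>)"
  unfolding weil_rep_def Let_def by (elim conjE) simp

lemma weil_rep_upper_unipotent:
  "weil_rep v \<sigma> \<tau> \<chi> I \<pi> \<Longrightarrow> u \<in> Fset \<sigma> \<Longrightarrow> \<Phi> \<in> S_chi v \<sigma> \<chi> \<Longrightarrow>
    \<pi> (1, u, 0, 1) \<Phi> = (\<lambda>x. \<tau> (u * Nm \<sigma> x) * \<Phi> x)"
  unfolding weil_rep_def Let_def by (elim conjE) simp

lemma weil_rep_weyl:
  assumes "weil_rep v \<sigma> \<tau> \<chi> I \<pi>"
  obtains \<gamma> where "\<gamma> \<noteq> 0"
    and "\<And>\<Phi>. \<Phi> \<in> S_chi v \<sigma> \<chi> \<Longrightarrow> \<pi> (0, 1, -1, 0) \<Phi> = (\<lambda>x. \<gamma> * FT I \<sigma> \<tau> \<Phi> (\<sigma> x))"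
  using assms unfolding weil_rep_def Let_def by (elim conjE exE) (metis norm_zero zero_neq_one)

lemma one_mem_NLx: "quad_conj \<sigma> \<Longrightarrow> (1::'a::field) \<in> NLx \<sigma>"
  using quad_conj_one[of \<sigma>] image_eqI[of 1 "Nm \<sigma>" "1::'a"] by (simp add: NLx_def Nm_def)

lemma Fset_constants:
  assumes qc: "quad_conj \<sigma>"
  shows "0 \<in> Fset \<sigma>" "1 \<in> Fset \<sigma>" "(-1::'a::field) \<in> Fset \<sigma>"
  using quad_conj_zero[OF qc] quad_conj_one[OF qc] quad_conj_uminus[OF qc, of 1]
  by (simp_all add: Fset_def)

lemma upper_unipotent_mem_Gplus: "quad_conj \<sigma> \<Longrightarrow> u \<in> Fset \<sigma> \<Longrightarrow> (1, u, 0, 1) \<in> Gplus \<sigma>"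
  using Fset_constants[of \<sigma>] one_mem_NLx[of \<sigma>] by (simp add: Gplus_def)

lemma lower_unipotent_mem_Gplus: "quad_conj \<sigma> \<Longrightarrow> u \<in> Fset \<sigma> \<Longrightarrow> (1, 0, u, 1) \<in> Gplus \<sigma>"
  using Fset_constants[of \<sigma>] one_mem_NLx[of \<sigma>] by (simp add: Gplus_def)

lemma weyl_mem_Gplus: "quad_conj \<sigma> \<Longrightarrow> (0, 1, -1, 0::'a::field) \<in> Gplus \<sigma>"
  using Fset_constants[of \<sigma>] one_mem_NLx[of \<sigma>] by (simp add: Gplus_def)

lemma upper_unipotent_mem_Kn:
  "quad_conj \<sigma> \<Longrightarrow> u \<in> Fset \<sigma> \<Longrightarrow> u \<in> pL v (int n) \<Longrightarrow> (1, u, 0, 1) \<in> Kn v \<sigma> n"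
  using Fset_constants[of \<sigma>] by (simp add: Kn_def)

lemma lower_unipotent_mem_Kn:
  "quad_conj \<sigma> \<Longrightarrow> u \<in> Fset \<sigma> \<Longrightarrow> u \<in> pL v (int n) \<Longrightarrow> (1, 0, u, 1) \<in> Kn v \<sigma> n"
  using Fset_constants[of \<sigma>] by (simp add: Kn_def)

lemma weil_rep_support_of_upper_invariant:
  assumes dv: "is_dval v" and qc: "quad_conj \<sigma>" and v\<sigma>: "\<And>x. v (\<sigma> x) = v x"
    and ac: "add_char_conductor v \<sigma> \<tau> c" and wr: "weil_rep v \<sigma> \<tau> \<chi> I \<pi>"
    and \<Psi>: "\<Psi> \<in> S_chi v \<sigma> \<chi>"
    and inv: "\<forall>u\<in>Fset \<sigma> \<inter> pL v m. \<pi> (1, u, 0, 1) \<Psi> = \<Psi>"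
  shows "\<forall>x. \<Psi> x \<noteq> 0 \<longrightarrow> x \<in> pL v \<lceil>real_of_int (c - m) / 2\<rceil>"
proof (intro allI impI)
  fix x assume x: "\<Psi> x \<noteq> 0"
  have "\<tau> (u * Nm \<sigma> x) = 1" if "u \<in> Fset \<sigma> \<inter> pL v m" for u
  proof -
    have "(\<lambda>x. \<tau> (u * Nm \<sigma> x) * \<Psi> x) = \<Psi>"
      using weil_rep_upper_unipotent[OF wr _ \<Psi>] inv that by auto
    then have "\<tau> (u * Nm \<sigma> x) * \<Psi> x = \<Psi> x" by (rule fun_cong)
    then show ?thesis using x by simp
  qed
  then show "x \<in> pL v \<lceil>real_of_int (c - m) / 2\<rceil>" using mem_pL_if_tau_Nm_trivial[OF dv qc v\<sigma> ac] by blast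
qed

lemma Kn_invariant_unipotent:
  assumes qc: "quad_conj \<sigma>" and fixed: "\<forall>k\<in>Kn v \<sigma> n. \<pi> k \<Phi> = \<Phi>"
  shows "\<forall>u\<in>Fset \<sigma> \<inter> pL v (int n). \<pi> (1, u, 0, 1) \<Phi> = \<Phi>"
    and "\<forall>u\<in>Fset \<sigma> \<inter> pL v (int n). \<pi> (1, 0, u, 1) \<Phi> = \<Phi>"
  using fixed upper_unipotent_mem_Kn[OF qc] lower_unipotent_mem_Kn[OF qc] by blast+

lemma weil_rep_weyl_upper_invariant:
  assumes dv: "is_dval v" and qc: "quad_conj \<sigma>" and wr: "weil_rep v \<sigma> \<tau> \<chi> I \<pi>"
    and \<Phi>: "\<Phi> \<in> S_chi v \<sigma> \<chi>"
    and lower: "\<forall>u\<in>Fset \<sigma> \<inter> pL v m. \<pi> (1, 0, u, 1) \<Phi> = \<Phi>"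
  shows "\<forall>u\<in>Fset \<sigma> \<inter> pL v m. \<pi> (1, u, 0, 1) (\<pi> (0, 1, -1, 0) \<Phi>) = \<pi> (0, 1, -1, 0) \<Phi>"
proof
  fix u assume "u \<in> Fset \<sigma> \<inter> pL v m"
  then have u: "u \<in> Fset \<sigma>" "u \<in> pL v m" by simp_all
  have "-u \<in> Fset \<sigma>" using u quad_conj_uminus[OF qc] by (simp add: Fset_def)
  have "m2mul (1, u, 0, 1) (0, 1, -1, 0) = m2mul (0, 1, -1, 0) (1, 0, -u, 1)" by simp
  then have "\<pi> (1, u, 0, 1) (\<pi> (0, 1, -1, 0) \<Phi>) = \<pi> (0, 1, -1, 0) (\<pi> (1, 0, -u, 1) \<Phi>)"
    using weil_rep_mult[OF wr upper_unipotent_mem_Gplus[OF qc u(1)] weyl_mem_Gplus[OF qc] \<Phi>]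
      weil_rep_mult[OF wr weyl_mem_Gplus[OF qc] lower_unipotent_mem_Gplus[OF qc \<open>-u \<in> Fset \<sigma>\<close>] \<Phi>]
    by simp
  also have "\<pi> (1, 0, -u, 1) \<Phi> = \<Phi>" using lower \<open>-u \<in> Fset \<sigma>\<close> pL_uminus[OF dv u(2)] by blast
  finally show "\<pi> (1, u, 0, 1) (\<pi> (0, 1, -1, 0) \<Phi>) = \<pi> (0, 1, -1, 0) \<Phi>" .
qed

lemma FT_support_of_weyl_support:
  assumes qc: "quad_conj \<sigma>" and v\<sigma>: "\<And>x. v (\<sigma> x) = v x"
    and wr: "weil_rep v \<sigma> \<tau> \<chi> I \<pi>" and \<Phi>: "\<Phi> \<in> S_chi v \<sigma> \<chi>"
    and supp: "\<forall>x. \<pi> (0, 1, -1, 0) \<Phi> x \<noteq> 0 \<longrightarrow> x \<in> pL v a"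
  shows "\<forall>z. FT I \<sigma> \<tau> \<Phi> z \<noteq> 0 \<longrightarrow> z \<in> pL v a"
proof (intro allI impI)
  fix z assume z: "FT I \<sigma> \<tau> \<Phi> z \<noteq> 0"
  obtain \<gamma> where "\<gamma> \<noteq> 0" and "\<pi> (0, 1, -1, 0) \<Phi> = (\<lambda>x. \<gamma> * FT I \<sigma> \<tau> \<Phi> (\<sigma> x))"
    using weil_rep_weyl[OF wr] \<Phi> by metis
  then have "\<pi> (0, 1, -1, 0) \<Phi> (\<sigma> z) \<noteq> 0" using z quad_conj_involution[OF qc] by simp
  then have "\<sigma> z \<in> pL v a" using supp by blast
  then show "z \<in> pL v a" using v\<sigma>[of z] quad_conj_nonzero[OF qc, of z] by (auto simp: mem_pL_iff)
qed

theorem lemma8p2: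
  fixes v :: "'l::field_char_0 \<Rightarrow> int"
    and \<sigma> :: "'l \<Rightarrow> 'l"
    and \<tau> \<chi> :: "'l \<Rightarrow> complex"
    and I :: "('l \<Rightarrow> complex) \<Rightarrow> complex"
    and \<pi> :: "'l m2 \<Rightarrow> ('l \<Rightarrow> complex) \<Rightarrow> ('l \<Rightarrow> complex)"
    and c :: int and n :: nat and \<Phi> :: "'l \<Rightarrow> complex"
  assumes "p_adic_field v"
    and "v 2 = 0"
    and "quad_conj \<sigma>"
    and "unramified v \<sigma>"
    and "add_char_conductor v \<sigma> \<tau> c"
    and "char_Lx v \<chi>"
    and "\<not> factors_through_norm \<sigma> \<chi>"
    and "haar_integral v I"
    and "self_dual v I \<sigma> \<tau>"
    and "weil_rep v \<sigma> \<tau> \<chi> I \<pi>"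
    and "1 \<le> n"
    and "\<Phi> \<in> S_chi v \<sigma> \<chi>"
    and "\<forall>k\<in>Kn v \<sigma> n. \<pi> k \<Phi> = \<Phi>"
  shows "(\<forall>x. \<Phi> x \<noteq> 0 \<longrightarrow> x \<in> pL v \<lceil>real_of_int (c - int n) / 2\<rceil>) \<and>
         (\<forall>x y. y \<in> pL v (c - \<lceil>real_of_int (c - int n) / 2\<rceil>) \<longrightarrow> \<Phi> (x + y) = \<Phi> x)"
proof -
  note qc = assms(3) and ac = assms(5) and wr = assms(10) and \<Phi> = assms(12)
  have dv: "is_dval v" and cp: "v_complete v" using assms(1) by (simp_all add: p_adic_field_def)
  note v\<sigma> = dval_quad_conj[OF dv cp assms(2) qc assms(4)]
  note support = weil_rep_support_of_upper_invariant[OF dv qc v\<sigma> ac wr]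
    and Kn_fixed = Kn_invariant_unipotent[where \<pi> = \<pi> and \<Phi> = \<Phi>, OF qc assms(13)]
  have "\<pi> (0, 1, -1, 0) \<Phi> \<in> S_chi v \<sigma> \<chi>" using weil_rep_closed[OF wr weyl_mem_Gplus[OF qc] \<Phi>] .
  from support[OF this weil_rep_weyl_upper_invariant[OF dv qc wr \<Phi> Kn_fixed(2)]]
  have "\<forall>z. FT I \<sigma> \<tau> \<Phi> z \<noteq> 0 \<longrightarrow> z \<in> pL v \<lceil>real_of_int (c - int n) / 2\<rceil>"
    by (rule FT_support_of_weyl_support[OF qc v\<sigma> wr \<Phi>])
  moreover have "schwartz v \<Phi>" using \<Phi> by (simp add: S_chi_def)
  ultimately show ?thesis
    using support[OF \<Phi> Kn_fixed(1)] translation_invariant_if_FT_supported[OF dv qc v\<sigma> ac assms(9)]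
    by blast
qed

end
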